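(* Let $\ell\in\{0,1,2,3\}$, $M,H\in\mathbb N$ and $p\in X_\ell$. Then there is a set $\Lambda\subseteq\mathbb N$ such that (1) $\lim_{N\to\infty}\frac1N\#(\{1,\dots,N\}\cap\Lambda)=1$, and (2) for every $n\in\Lambda$, the truncation $[T^{n+h}p]_M$ is the same for all $0\le h\le H-1$.
   Context: Fix integers $2\le q_1<q_2<\cdots$ such that $q_{k+1}>q_k^4+3q_k$ for every $k\ge1$. For $k\ge1$ put $q^{(0)}_k=q_{2k}$, $q^{(1)}_k=q_{2k+1}$, $q^{(2)}_k=q^{(0)}_k-1$, $q^{(3)}_k=q^{(1)}_k-1$, and $L^{(i)}_k=\lfloor q^{(i)}_{k+1}/(3q^{(i)}_k)\rfloor$. Let $s^{(i)}_k\in\{-1,0,1\}^{\mathbb N}$ (indices $n\ge1$) be given by $s^{(i)}_k(n)=1$ if $n=jq^{(i)}_k$ with $1\le j\le L^{(i)}_k$, $s^{(i)}_k(n)=-1$ if $n=jq^{(i)}_k$ with $L^{(i)}_k<j\le2L^{(i)}_k$, and $s^{(i)}_k(n)=0$ otherwise. For $w\in\{-1,0,1\}^{\mathbb N}$ and $p\in\mathbb N_0$ let $\sigma^{-p}w$ be defined by $(\sigma^{-p}w)(n)=0$ for $1\le n\le p$ and $(\sigma^{-p}w)(n)=w(n-p)$ for $n>p$. For $l\le m$ write $w|_l^m=(w_l,\dots,w_m)$. Let $R^{(i)}_k=\{(\sigma^{-p}s^{(i)}_k)|_{q^{(i)}_k}^{q^{(i)}_{k+1}-1}:p=0,1,\dots,q^{(i)}_k\}$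 and $P^{(i)}=\{y\in\{-1,0,1\}^{\mathbb N}: y(n)=0\text{ for }1\le n<q^{(i)}_1,\ y|_{q^{(i)}_k}^{q^{(i)}_{k+1}-1}\in R^{(i)}_k\text{ for all }k\ge1\}$. Let $Z=\{-1,0,1\}^{\mathbb N}\times\{-1,0,1\}^{\mathbb Z}$, where each factor carries the metric $d(u,v)=3^{-\min\{|m|:u_m\neq v_m\}}$ and $Z$ the maximum of the two. $\sigma$ is the left shift $(\sigma u)_m=u_{m+1}$ (invertible on $\{-1,0,1\}^{\mathbb Z}$). Define $T:Z\to Z$, $T(y,z)=(\sigma y,\sigma^{y_1}z)$, and $X_i=\overline{\bigcup_{n\ge0}T^n(P^{(i)}\times\{-1,0,1\}^{\mathbb Z})}$ for $i\in\{0,1,2,3\}$. For $p=(y,z)\in Z$ and $M\in\mathbb N$, $[p]_M=((y_1,\dots,y_M),(z_{-M},\dots,z_M))$. *)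

theory Defs
  imports Complex_Main
begin

text \<open>One-sided sequences in {-1,0,1}^N (indices n >= 1) are functions nat => int,
  with the unused index 0 normalised to 0. Two-sided sequences are int => int.\<close>

definition Yspace :: "(nat \<Rightarrow> int) set" where
  "Yspace = {y. y 0 = 0 \<and> (\<forall>n. y n \<in> {-1, 0, 1})}"

definition Zspace :: "(int \<Rightarrow> int) set" where
  "Zspace = {z. \<forall>m. z m \<in> {-1, 0, 1}}"

definition Zprod :: "((nat \<Rightarrow> int) \<times> (int \<Rightarrow> int)) set" where
  "Zprod = Yspace \<times> Zspace"

definition distY :: "(nat \<Rightarrow> int) \<Rightarrow> (nat \<Rightarrow> int) \<Rightarrow> real" where
  "distY u v = (if (\<forall>n\<ge>1. u n = v n) then 0
                else 3 powr (- real (LEAST n. n \<ge> 1 \<and> u n \<noteq> v n)))"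

definition distZ :: "(int \<Rightarrow> int) \<Rightarrow> (int \<Rightarrow> int) \<Rightarrow> real" where
  "distZ u v = (if u = v then 0
                else 3 powr (- real (LEAST k::nat. \<exists>m. \<bar>m\<bar> = int k \<and> u m \<noteq> v m)))"

definition distP :: "((nat \<Rightarrow> int) \<times> (int \<Rightarrow> int)) \<Rightarrow> ((nat \<Rightarrow> int) \<times> (int \<Rightarrow> int)) \<Rightarrow> real" where
  "distP a b = max (distY (fst a) (fst b)) (distZ (snd a) (snd b))"

definition Zclosure :: "((nat \<Rightarrow> int) \<times> (int \<Rightarrow> int)) set \<Rightarrow> ((nat \<Rightarrow> int) \<times> (int \<Rightarrow> int)) set" where
  "Zclosure S = {x \<in> Zprod. \<forall>e>0. \<exists>s\<in>S. distP x s < e}"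

definition shiftY :: "(nat \<Rightarrow> int) \<Rightarrow> (nat \<Rightarrow> int)" where
  "shiftY y = (\<lambda>n. if n = 0 then 0 else y (n + 1))"

definition shiftZ :: "int \<Rightarrow> (int \<Rightarrow> int) \<Rightarrow> (int \<Rightarrow> int)" where
  "shiftZ k z = (\<lambda>m. z (m + k))"

definition Tmap :: "((nat \<Rightarrow> int) \<times> (int \<Rightarrow> int)) \<Rightarrow> ((nat \<Rightarrow> int) \<times> (int \<Rightarrow> int))" where
  "Tmap p = (shiftY (fst p), shiftZ (fst p 1) (snd p))"

definition rshift :: "nat \<Rightarrow> (nat \<Rightarrow> int) \<Rightarrow> (nat \<Rightarrow> int)" where
  "rshift p w = (\<lambda>n. if n \<le> p then 0 else w (n - p))"

definition qi :: "(nat \<Rightarrow> nat) \<Rightarrow> nat \<Rightarrow> nat \<Rightarrow> nat" where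
  "qi q i k = (if i = 0 then q (2*k) else if i = 1 then q (2*k+1)
               else if i = 2 then q (2*k) - 1 else q (2*k+1) - 1)"

definition Li :: "(nat \<Rightarrow> nat) \<Rightarrow> nat \<Rightarrow> nat \<Rightarrow> nat" where
  "Li q i k = nat \<lfloor>real (qi q i (k+1)) / (3 * real (qi q i k))\<rfloor>"

definition si :: "(nat \<Rightarrow> nat) \<Rightarrow> nat \<Rightarrow> nat \<Rightarrow> (nat \<Rightarrow> int)" where
  "si q i k = (\<lambda>n.
     if n \<ge> 1 \<and> (\<exists>j. 1 \<le> j \<and> j \<le> Li q i k \<and> n = j * qi q i k) then 1
     else if n \<ge> 1 \<and> (\<exists>j. Li q i k < j \<and> j \<le> 2 * Li q i k \<and> n = j * qi q i k) then -1
     else 0)"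

definition seg :: "(nat \<Rightarrow> int) \<Rightarrow> nat \<Rightarrow> nat \<Rightarrow> int list" where
  "seg w l m = map w [l..<m+1]"

definition Ri :: "(nat \<Rightarrow> nat) \<Rightarrow> nat \<Rightarrow> nat \<Rightarrow> int list set" where
  "Ri q i k = {seg (rshift p (si q i k)) (qi q i k) (qi q i (k+1) - 1) | p. p \<le> qi q i k}"

definition Pi :: "(nat \<Rightarrow> nat) \<Rightarrow> nat \<Rightarrow> (nat \<Rightarrow> int) set" where
  "Pi q i = {y \<in> Yspace. (\<forall>n. 1 \<le> n \<and> n < qi q i 1 \<longrightarrow> y n = 0) \<and>
                         (\<forall>k\<ge>1. seg y (qi q i k) (qi q i (k+1) - 1) \<in> Ri q i k)}"

definition Xi :: "(nat \<Rightarrow> nat) \<Rightarrow> nat \<Rightarrow> ((nat \<Rightarrow> int) \<times> (int \<Rightarrow> int)) set" where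
  "Xi q i = Zclosure (\<Union>n. (Tmap ^^ n) ` (Pi q i \<times> Zspace))"

definition trunc :: "nat \<Rightarrow> ((nat \<Rightarrow> int) \<times> (int \<Rightarrow> int)) \<Rightarrow> int list \<times> int list" where
  "trunc M p = (map (fst p) [1..<M+1], map (snd p) [- int M..int M])"

end

theory Submission imports Defs begin

text \<open>For \<open>y \<in> Pi q l\<close> and \<open>Q = qi q l\<close>, the nonzero entries of \<open>y\<close> in the block
  \<open>[Q k, Q (k + 1))\<close> form an arithmetic progression of step \<open>Q k\<close> ending before two thirds of
  the block, so beyond \<open>Q k\<close> any two nonzero entries are at least \<open>Q k\<close> apart. This sparsity
  survives shifts and limits, hence holds for the first coordinate \<open>y\<close> of every \<open>p \<in> Xi q l\<close>.
  Counting then shows that the \<open>n \<le> N\<close> for which \<open>y\<close> has a nonzero entry in \<open>(n, n + H + M]\<close>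
  number at most \<open>(H + M) N / D + O(1)\<close> for every \<open>D\<close>, so the remaining \<open>n\<close> have density one.
  For such \<open>n\<close>, the further steps \<open>T\<^sup>h\<close>, \<open>h < H\<close>, only shift a block of zeros in \<open>y\<close> and
  do not move \<open>z\<close>, so the truncations agree.\<close>

lemma fst_Tmap_iter: "m \<ge> 1 \<Longrightarrow> fst ((Tmap ^^ n) x) m = fst x (m + n)"
  by (induction n arbitrary: m) (auto simp: Tmap_def shiftY_def)

lemma snd_Tmap_iter: "snd ((Tmap ^^ n) x) = (\<lambda>m. snd x (m + (\<Sum>i\<in>{1..n}. fst x i)))"
proof (induction n)
  case 0
  then show ?case by simp
next
  case (Suc n)
  have "snd ((Tmap ^^ Suc n) x) = (\<lambda>m. snd ((Tmap ^^ n) x) (m + fst ((Tmap ^^ n) x) 1))"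
    by (simp add: Tmap_def shiftZ_def)
  also have "\<dots> = (\<lambda>m. snd x (m + (\<Sum>i\<in>{1..Suc n}. fst x i)))"
    using Suc fst_Tmap_iter[of 1 n x] by (simp add: ac_simps)
  finally show ?case .
qed

definition quiet_set :: "nat \<Rightarrow> (nat \<Rightarrow> int) \<Rightarrow> nat set" where
  "quiet_set W y = {n. 1 \<le> n \<and> (\<forall>t\<in>{n<..n+W}. y t = 0)}"

lemma trunc_Tmap_iter_eq:
  assumes "n \<in> quiet_set (H + M) (fst p)" "h < H"
  shows "trunc M ((Tmap ^^ (n + h)) p) = trunc M ((Tmap ^^ n) p)"
proof -
  have quiet: "fst p t = 0" if "n < t" "t \<le> n + H + M" for t
    using assms(1) that unfolding quiet_set_def by auto
  have "fst ((Tmap ^^ (n + h)) p) m = fst ((Tmap ^^ n) p) m" if "m \<in> {1..M}" for m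
    using that assms(2) quiet[of "m + (n + h)"] quiet[of "m + n"] by (simp add: fst_Tmap_iter)
  moreover have "(\<Sum>i\<in>{1..n+h}. fst p i) = (\<Sum>i\<in>{1..n}. fst p i)"
  proof -
    have "(\<Sum>i\<in>{n+1..n+h}. fst p i) = 0"
      using quiet assms(2) by (intro sum.neutral) auto
    moreover have "(\<Sum>i\<in>{1..n+h}. fst p i) = (\<Sum>i\<in>{1..n}. fst p i) + (\<Sum>i\<in>{n+1..n+h}. fst p i)"
      by (rule sum.ub_add_nat) simp
    ultimately show ?thesis by simp
  qed
  ultimately show ?thesis
    by (auto simp: trunc_def snd_Tmap_iter)
qed

definition sparse_from :: "nat \<Rightarrow> nat \<Rightarrow> (nat \<Rightarrow> int) \<Rightarrow> bool" where
  "sparse_from D N0 y \<longleftrightarrow>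
     (\<forall>a b. 1 \<le> a \<longrightarrow> N0 \<le> a \<longrightarrow> a < b \<longrightarrow> y a \<noteq> 0 \<longrightarrow> y b \<noteq> 0 \<longrightarrow> D \<le> b - a)"

lemma sparse_from_mono: "sparse_from D' N0 y \<Longrightarrow> D \<le> D' \<Longrightarrow> sparse_from D N0 y"
  unfolding sparse_from_def by fastforce

lemma sparse_from_Tmap_iter:
  assumes "sparse_from D N0 (fst x)"
  shows "sparse_from D N0 (fst ((Tmap ^^ n) x))"
  unfolding sparse_from_def
proof (intro allI impI)
  fix a b assume "1 \<le> a" "N0 \<le> a" "a < b"
    and "fst ((Tmap ^^ n) x) a \<noteq> 0" "fst ((Tmap ^^ n) x) b \<noteq> 0"
  then have "D \<le> (b + n) - (a + n)"
    using assms[unfolded sparse_from_def, rule_format, of "a + n" "b + n"] by (simp add: fst_Tmap_iter)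
  then show "D \<le> b - a" by simp
qed

lemma distY_less_imp_eq:
  assumes "distY u v < 3 powr (- real b)" "1 \<le> n" "n \<le> b"
  shows "u n = v n"
proof (rule ccontr)
  assume ne: "u n \<noteq> v n"
  let ?L = "LEAST n. n \<ge> 1 \<and> u n \<noteq> v n"
  have "?L \<le> n" using ne assms by (intro Least_le) auto
  then have "3 powr (- real b) \<le> 3 powr (- real ?L)" using assms by (intro powr_mono) auto
  moreover have "distY u v = 3 powr (- real ?L)" using ne assms unfolding distY_def by auto
  ultimately show False using assms(1) by simp
qed

lemma sparse_from_Zclosure:
  assumes "\<forall>s\<in>S. sparse_from D N0 (fst s)" "x \<in> Zclosure S"
  shows "sparse_from D N0 (fst x)"
  unfolding sparse_from_def
proof (intro allI impI)
  fix a b assume ab: "1 \<le> a" "N0 \<le> a" "a < b" "fst x a \<noteq> 0" "fst x b \<noteq> 0"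
  have "(3::real) powr (- real b) > 0" by simp
  then obtain s where s: "s \<in> S" "distP x s < 3 powr (- real b)"
    using assms(2) unfolding Zclosure_def by blast
  then have "distY (fst x) (fst s) < 3 powr (- real b)" unfolding distP_def by simp
  then have "fst x a = fst s a" "fst x b = fst s b" using ab by (auto intro: distY_less_imp_eq)
  then show "D \<le> b - a" using assms(1) s(1) ab unfolding sparse_from_def by auto
qed

lemma card_sparse_support_le:
  assumes "sparse_from D N0 y" "D \<ge> 1"
  shows "card {t. N0 < t \<and> t \<le> K \<and> y t \<noteq> 0} \<le> K div D + 1"
proof -
  let ?T = "{t. N0 < t \<and> t \<le> K \<and> y t \<noteq> 0}"
  have "inj_on (\<lambda>t. t div D) ?T"
  proof (rule linorder_inj_onI')
    fix u v assume "u \<in> ?T" "v \<in> ?T" "u < v"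
    then have "D \<le> v - u" using assms(1) unfolding sparse_from_def by auto
    then have "u + D \<le> v" using \<open>u < v\<close> by simp
    then have "u div D + 1 \<le> v div D" using assms(2) by (metis div_add_self2 div_le_mono not_one_le_zero)
    then show "u div D \<noteq> v div D" by simp
  qed
  then have "card ?T = card ((\<lambda>t. t div D) ` ?T)" by (simp add: card_image)
  also have "\<dots> \<le> card {..K div D}" by (intro card_mono) (auto intro: div_le_mono)
  finally show ?thesis by simp
qed

lemma card_not_quiet_le:
  assumes "sparse_from D N0 y" "D \<ge> 1"
  shows "card ({1..N} - quiet_set W y) \<le> N0 + W * ((N + W) div D + 1)"
proof -
  let ?T = "{t. N0 < t \<and> t \<le> N + W \<and> y t \<noteq> 0}"
  have finT: "finite ?T" by (rule finite_subset[of _ "{..N+W}"]) auto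
  have "{1..N} - quiet_set W y \<subseteq> {1..N0} \<union> (\<Union>t\<in>?T. {t - W..<t})"
  proof
    fix n assume n: "n \<in> {1..N} - quiet_set W y"
    then obtain t where t: "n < t" "t \<le> n + W" "y t \<noteq> 0" by (auto simp: quiet_set_def)
    show "n \<in> {1..N0} \<union> (\<Union>t\<in>?T. {t - W..<t})"
    proof (cases "n \<le> N0")
      case False
      with n t have "t \<in> ?T" "n \<in> {t - W..<t}" by auto
      then show ?thesis by blast
    qed (use n in auto)
  qed
  then have "card ({1..N} - quiet_set W y) \<le> card ({1..N0} \<union> (\<Union>t\<in>?T. {t - W..<t}))"
    using finT by (intro card_mono) auto
  also have "\<dots> \<le> N0 + card (\<Union>t\<in>?T. {t - W..<t})"
    using card_Un_le[of "{1..N0}"] by simp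
  also have "card (\<Union>t\<in>?T. {t - W..<t}) \<le> (\<Sum>t\<in>?T. card {t - W..<t})"
    using finT by (rule card_UN_le)
  also have "\<dots> \<le> (\<Sum>t\<in>?T. W)"
    by (rule sum_mono) simp
  also have "\<dots> = card ?T * W" by simp
  also have "\<dots> \<le> ((N + W) div D + 1) * W"
    using card_sparse_support_le[OF assms] by (rule mult_le_mono1)
  finally show ?thesis by (simp add: mult.commute)
qed

lemma LIMSEQ_zero_if_le_const_over_n_plus:
  fixes f :: "nat \<Rightarrow> real"
  assumes nonneg: "\<And>N. 0 \<le> f N"
    and bound: "\<And>e. e > 0 \<Longrightarrow> \<exists>C. \<forall>N\<ge>1. f N \<le> C / real N + e"
  shows "f \<longlonglongrightarrow> 0"
proof (rule order_tendstoI)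
  fix a :: real assume "a < 0"
  then show "\<forall>\<^sub>F N in sequentially. a < f N" using nonneg by (simp add: less_le_trans)
next
  fix a :: real assume "0 < a"
  then obtain C where C: "\<forall>N\<ge>1. f N \<le> C / real N + a / 2" using bound[of "a / 2"] by auto
  have "\<forall>\<^sub>F N in sequentially. C / real N < a / 2"
    by (rule order_tendstoD(2)[OF lim_const_over_n]) (use \<open>0 < a\<close> in simp)
  moreover have "\<forall>\<^sub>F N in sequentially. N \<ge> 1" by (rule eventually_ge_at_top)
  ultimately show "\<forall>\<^sub>F N in sequentially. f N < a"
  proof eventually_elim
    case (elim N)
    then have "f N \<le> C / real N + a / 2" using C by simp
    with elim show ?case by linarith
  qed
qed

lemma quiet_set_density_one:
  assumes sparse: "\<And>D. \<exists>N0. sparse_from D N0 y"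
  shows "(\<lambda>N. real (card ({1..N} \<inter> quiet_set W y)) / real N) \<longlonglongrightarrow> 1"
proof -
  let ?bad = "\<lambda>N. real (card ({1..N} - quiet_set W y)) / real N"
  have "?bad \<longlonglongrightarrow> 0"
  proof (rule LIMSEQ_zero_if_le_const_over_n_plus)
    fix e :: real assume "e > 0"
    define D where "D = nat \<lceil>W / e\<rceil> + 1"
    obtain N0 where N0: "sparse_from D N0 y" using sparse by blast
    have "D \<ge> 1" "real W / e < real D"
      using real_nat_ceiling_ge[of "W / e"] by (auto simp: D_def)
    then have D: "D \<ge> 1" "real W / real D \<le> e"
      using \<open>e > 0\<close> by (auto simp: field_simps)
    define C where "C = real (N0 + W) + real (W * W) / real D"
    show "\<exists>C. \<forall>N\<ge>1. ?bad N \<le> C / real N + e"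
    proof (intro exI allI impI)
      fix N :: nat assume "N \<ge> 1"
      let ?c = "card ({1..N} - quiet_set W y)"
      have "D * ?c \<le> D * (N0 + W) + W * (D * ((N + W) div D))"
        using mult_le_mono2[OF card_not_quiet_le[OF N0 D(1), of N W], of D]
        by (simp add: algebra_simps)
      also have "\<dots> \<le> D * (N0 + W) + W * (N + W)"
        using times_div_less_eq_dividend by simp
      finally have "real D * real ?c \<le> real D * real (N0 + W) + real (W * W) + real W * real N"
        using of_nat_mono by (fastforce simp: algebra_simps)
      then have "real ?c \<le> C + real W / real D * real N"
        using D(1) by (simp add: C_def field_simps)
      then have "?bad N \<le> C / real N + real W / real D"
        using \<open>N \<ge> 1\<close> by (simp add: field_simps)
      then show "?bad N \<le> C / real N + e" using D(2) by linarith
    qed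
  qed simp
  moreover have "\<forall>\<^sub>F N in sequentially. 1 - ?bad N = real (card ({1..N} \<inter> quiet_set W y)) / real N"
    using eventually_ge_at_top[of 1]
  proof eventually_elim
    case (elim N)
    then show ?case
      using card_Int_Diff[of "{1..N}" "quiet_set W y"] by (simp add: field_simps)
  qed
  ultimately show ?thesis
    using Lim_transform_eventually[OF tendsto_diff[OF tendsto_const]] by fastforce
qed

locale fast_growing =
  fixes q :: "nat \<Rightarrow> nat" and l :: nat
  assumes q_1: "2 \<le> q 1"
    and q_growth: "\<And>k. k \<ge> 1 \<Longrightarrow> q k ^ 4 + 3 * q k < q (k + 1)"
begin

abbreviation Q :: "nat \<Rightarrow> nat" where
  "Q \<equiv> qi q l"

lemma q_Suc_gt: "k \<ge> 1 \<Longrightarrow> 4 * q k < q (k + 1)"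
  using q_growth[of k] self_le_power[of "q k" 4] by (cases "q k = 0") auto

lemma q_ge_2: "k \<ge> 1 \<Longrightarrow> 2 \<le> q k"
proof (induction k rule: dec_induct)
  case base
  show ?case by (rule q_1)
next
  case (step k)
  then show ?case using q_Suc_gt[of k] by simp
qed

lemma Q_pos: "k \<ge> 1 \<Longrightarrow> 1 \<le> Q k"
  using q_ge_2[of "2 * k"] q_ge_2[of "2 * k + 1"] by (auto simp: qi_def)

lemma Q_Suc_ge: assumes "k \<ge> 1" shows "6 * Q k \<le> Q (k + 1)"
proof -
  have "16 * q j + 5 \<le> q (j + 2)" if "j \<ge> 1" for j
    using q_Suc_gt[of j] q_Suc_gt[of "j + 1"] that by simp
  from this[of "2 * k"] this[of "2 * k + 1"] assms show ?thesis
    by (auto simp: qi_def)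
qed

lemma Q_less: "k \<ge> 1 \<Longrightarrow> Q k < Q (k + 1)"
  using Q_Suc_ge[of k] Q_pos[of k] by linarith

lemma Q_mono: assumes "1 \<le> k" "k \<le> k'" shows "Q k \<le> Q k'"
  using assms(2)
proof (induction k' rule: dec_induct)
  case (step k')
  then show ?case using Q_less[of k'] assms(1) by simp
qed simp

lemma Q_ge_index: "k \<ge> 1 \<Longrightarrow> k \<le> Q k"
  by (induction k rule: dec_induct) (use Q_pos Q_less in fastforce)+

lemma Li_bound: assumes "k \<ge> 1" shows "3 * Li q l k * Q k \<le> Q (k + 1)"
proof -
  have pos: "real (Q k) > 0" using Q_pos[OF assms] by simp
  then have "real (Li q l k) \<le> real (Q (k + 1)) / (3 * real (Q k))"
    by (simp add: Li_def of_nat_nat)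
  then have "3 * real (Li q l k) * real (Q k) \<le> real (Q (k + 1))"
    using pos by (simp add: field_simps)
  then show ?thesis by (metis of_nat_le_iff of_nat_mult of_nat_numeral)
qed

lemma Q_block_exists:
  assumes "Q 1 \<le> n" shows "\<exists>k\<ge>1. Q k \<le> n \<and> n < Q (k + 1)"
proof -
  define m where "m = (LEAST m. m \<ge> 1 \<and> n < Q m)"
  have "n + 1 \<ge> 1 \<and> n < Q (n + 1)" using Q_ge_index[of "n + 1"] by simp
  then have m: "m \<ge> 1" "n < Q m" unfolding m_def by (metis (mono_tags, lifting) LeastI)+
  then have "m \<noteq> 1" using assms by auto
  moreover have "\<not> (m - 1 \<ge> 1 \<and> n < Q (m - 1))"
    unfolding m_def by (rule not_less_Least) (use m \<open>m \<noteq> 1\<close> m_def in auto)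
  ultimately show ?thesis using m by (intro exI[of _ "m - 1"]) auto
qed

lemma si_nonzero: "si q l k m \<noteq> 0 \<Longrightarrow> \<exists>j. 1 \<le> j \<and> j \<le> 2 * Li q l k \<and> m = j * Q k"
  unfolding si_def by (fastforce split: if_splits)

lemma Pi_block_support:
  assumes "y \<in> Pi q l" "k \<ge> 1"
  obtains p where "p \<le> Q k"
    and "\<And>a. Q k \<le> a \<Longrightarrow> a < Q (k + 1) \<Longrightarrow> y a \<noteq> 0 \<Longrightarrow>
           \<exists>j. 1 \<le> j \<and> j \<le> 2 * Li q l k \<and> a = p + j * Q k"
proof -
  from assms have "seg y (Q k) (Q (k + 1) - 1) \<in> Ri q l k" unfolding Pi_def by auto
  then obtain p where p: "p \<le> Q k"
    and seg_eq: "seg y (Q k) (Q (k + 1) - 1) = seg (rshift p (si q l k)) (Q k) (Q (k + 1) - 1)"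
    unfolding Ri_def by auto
  have "Q (k + 1) - 1 + 1 = Q (k + 1)" using Q_less[OF assms(2)] by simp
  then have "map y [Q k..<Q (k + 1)] = map (rshift p (si q l k)) [Q k..<Q (k + 1)]"
    using seg_eq by (simp only: seg_def)
  then have y: "y a = rshift p (si q l k) a" if "Q k \<le> a" "a < Q (k + 1)" for a
    unfolding map_eq_conv using that by simp
  show ?thesis
  proof (rule that[OF p])
    fix a assume "Q k \<le> a" "a < Q (k + 1)" "y a \<noteq> 0"
    then have "p < a" "si q l k (a - p) \<noteq> 0"
      using y by (auto simp: rshift_def split: if_splits)
    then show "\<exists>j. 1 \<le> j \<and> j \<le> 2 * Li q l k \<and> a = p + j * Q k"
      using si_nonzero by fastforce
  qed
qed

lemma Pi_sparse_from:
  assumes y: "y \<in> Pi q l" and k: "k \<ge> 1"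
  shows "sparse_from (Q k) (Q k) y"
  unfolding sparse_from_def
proof (intro allI impI)
  fix a b assume ab: "1 \<le> a" "Q k \<le> a" "a < b" "y a \<noteq> 0" "y b \<noteq> 0"
  then have "Q 1 \<le> a" using Q_mono[of 1 k] k by simp
  then obtain k' where k': "k' \<ge> 1" "Q k' \<le> a" "a < Q (k' + 1)" using Q_block_exists by blast
  have "k \<le> k'"
  proof (rule ccontr)
    assume "\<not> k \<le> k'"
    then have "Q (k' + 1) \<le> Q k" using Q_mono k' by simp
    then show False using k' ab by simp
  qed
  then have Qkk': "Q k \<le> Q k'" using Q_mono k by simp
  obtain p where p: "p \<le> Q k'"
    and supp: "\<And>c. Q k' \<le> c \<Longrightarrow> c < Q (k' + 1) \<Longrightarrow> y c \<noteq> 0 \<Longrightarrow>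
                 \<exists>j. 1 \<le> j \<and> j \<le> 2 * Li q l k' \<and> c = p + j * Q k'"
    using Pi_block_support[OF y k'(1)] by blast
  obtain j where j: "j \<le> 2 * Li q l k'" "a = p + j * Q k'" using supp k' ab by blast
  show "Q k \<le> b - a"
  proof (cases "b < Q (k' + 1)")
    case True
    moreover have "Q k' \<le> b" using k' ab by simp
    ultimately obtain j' where j': "b = p + j' * Q k'" using supp[of b] ab(5) by blast
    with j ab have "j < j'" by (simp add: mult_less_cancel2)
    then have "(j + 1) * Q k' \<le> j' * Q k'" by (intro mult_le_mono1) simp
    then show ?thesis using j j' Qkk' by simp
  next
    case False
    \<comment> \<open>the support in block \<open>k'\<close> ends by \<open>Q k' + 2 L Q k' \<le> Q k' + 2 Q (k' + 1) / 3\<close>\<close>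
    define X where "X = Li q l k' * Q k'"
    have "3 * X \<le> Q (k' + 1)" using Li_bound[OF k'(1)] by (simp add: X_def mult.assoc)
    moreover have "j * Q k' \<le> 2 * X" using j(1) by (simp add: X_def mult_le_mono1)
    moreover have "6 * Q k' \<le> Q (k' + 1)" by (rule Q_Suc_ge[OF k'(1)])
    ultimately show ?thesis using j(2) p False Qkk' by linarith
  qed
qed

lemma Xi_eventually_sparse:
  assumes "x \<in> Xi q l" shows "\<exists>N0. sparse_from D N0 (fst x)"
proof -
  let ?k = "max 1 D"
  have "sparse_from D (Q ?k) (fst s)" if "s \<in> (\<Union>n. (Tmap ^^ n) ` (Pi q l \<times> Zspace))" for s
  proof -
    from that obtain n y z where s: "s = (Tmap ^^ n) (y, z)" and y: "y \<in> Pi q l" by auto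
    have "sparse_from (Q ?k) (Q ?k) (fst (y, z))" using Pi_sparse_from[OF y] by simp
    then have "sparse_from (Q ?k) (Q ?k) (fst s)" unfolding s by (rule sparse_from_Tmap_iter)
    moreover have "D \<le> Q ?k" using Q_ge_index[of ?k] by simp
    ultimately show ?thesis by (rule sparse_from_mono)
  qed
  then have "sparse_from D (Q ?k) (fst x)"
    using assms unfolding Xi_def by (intro sparse_from_Zclosure) auto
  then show ?thesis ..
qed

end

theorem mainTheorem11:
  fixes q :: "nat \<Rightarrow> nat" and l M H :: nat and p :: "(nat \<Rightarrow> int) \<times> (int \<Rightarrow> int)"
  assumes "2 \<le> q 1"
    and "\<And>k. k \<ge> 1 \<Longrightarrow> q k < q (k+1)"
    and "\<And>k. k \<ge> 1 \<Longrightarrow> q (k+1) > q k ^ 4 + 3 * q k"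
    and "l \<in> {0, 1, 2, 3}" and "M \<ge> 1" and "H \<ge> 1"
    and "p \<in> Xi q l"
  shows "\<exists>\<Lambda> :: nat set. \<Lambda> \<subseteq> {1..} \<and>
           (\<lambda>N. real (card ({1..N} \<inter> \<Lambda>)) / real N) \<longlonglongrightarrow> 1 \<and>
           (\<forall>n\<in>\<Lambda>. \<forall>h<H. trunc M ((Tmap ^^ (n + h)) p) = trunc M ((Tmap ^^ n) p))"
proof (intro exI conjI)
  interpret fast_growing q l using assms(1,3) by unfold_locales auto
  let ?\<Lambda> = "quiet_set (H + M) (fst p)"
  show "?\<Lambda> \<subseteq> {1..}" by (auto simp: quiet_set_def)
  show "(\<lambda>N. real (card ({1..N} \<inter> ?\<Lambda>)) / real N) \<longlonglongrightarrow> 1"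
    using Xi_eventually_sparse[OF assms(7)] by (rule quiet_set_density_one)
  show "\<forall>n\<in>?\<Lambda>. \<forall>h<H. trunc M ((Tmap ^^ (n + h)) p) = trunc M ((Tmap ^^ n) p)"
    using trunc_Tmap_iter_eq by blast
qed

end
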